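(* Let $L\ge2$, $N\ge d_x$, $X_\epsilon$ of rank $d_x$, $\tilde W_{L:1}X=Y$, and $p=\min(d_x,d_y)$ (i.e. every hidden width $d_i$ is at least $\min(d_x,d_y)$). Then the end-to-end matrices of all global minimizers of $\mathcal L_{base}$ and of $\mathcal L_{st}$ coincide, both being equal to $YX_\epsilon^T(X_\epsilon X_\epsilon^T)^{-1}$.
   Context: Clean inputs $x_i\in\mathbb R^{d_x}$, targets $y_i\in\mathbb R^{d_y}$, noise $\epsilon_i\in\mathbb R^{d_x}$, $i=1,\dots,N$; $X\in\mathbb R^{d_x\times N}$ has columns $x_i$, $X_\epsilon$ has columns $x_i+\epsilon_i$, $Y\in\mathbb R^{d_y\times N}$ has columns $y_i$. A deep linear network with $L$ layers is a tuple $(W_L,\dots,W_1)$ with $W_i\in\mathbb R^{d_i\times d_{i-1}}$, $d_0=d_x$, $d_L=d_y$; $W_{i:j}:=W_iW_{i-1}\cdots W_j$; $p:=\min_{0\le i\le L}d_i$. Base loss: $\mathcal L_{base}(W_L,\dots,W_1)=\|W_{L:1}X_\epsilon-Y\|_F^2$. Fix $i^*\in\{1,\dots,L\}$, $\lambda>0$ and teacher weights $(\tilde W_L,\dots,\tilde W_1)$ of the same shapes; the student–teacher loss is $\mathcal L_{st}(W_L,\dots,W_1)=\|W_{L:1}X_\epsilon-Y\|_F^2+\lambda\|W_{i^*:1}X_\epsilon-\tilde W_{i^*:1}X\|_F^2$. *)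

theory Defs
  imports "Jordan_Normal_Form.Gauss_Jordan_Elimination" "Jordan_Normal_Form.DL_Rank"
begin

definition fro2 :: "real mat \<Rightarrow> real" where
  "fro2 A = (\<Sum>i<dim_row A. \<Sum>j<dim_col A. (A $$ (i, j))^2)"

text \<open>A deep linear network with L layers and widths d 0, ..., d L: layer i (1 \<le> i \<le> L)
  is a d i \<times> d (i-1) matrix.  Values W k for k outside 1..L are irrelevant.\<close>
definition valid_net :: "nat \<Rightarrow> (nat \<Rightarrow> nat) \<Rightarrow> (nat \<Rightarrow> real mat) \<Rightarrow> bool" where
  "valid_net L d W \<longleftrightarrow> (\<forall>i\<in>{1..L}. W i \<in> carrier_mat (d i) (d (i - 1)))"

text \<open>wprod W i j = W i * W (i-1) * ... * W j  (intended for j \<le> i).\<close>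
definition wprod :: "(nat \<Rightarrow> real mat) \<Rightarrow> nat \<Rightarrow> nat \<Rightarrow> real mat" where
  "wprod W i j = foldl (\<lambda>A k. A * W k) (W i) (rev [j..<i])"

definition loss_base :: "nat \<Rightarrow> real mat \<Rightarrow> real mat \<Rightarrow> (nat \<Rightarrow> real mat) \<Rightarrow> real" where
  "loss_base L Xe Y W = fro2 (wprod W L 1 * Xe - Y)"

definition loss_st ::
  "nat \<Rightarrow> nat \<Rightarrow> real \<Rightarrow> (nat \<Rightarrow> real mat) \<Rightarrow> real mat \<Rightarrow> real mat \<Rightarrow> real mat
     \<Rightarrow> (nat \<Rightarrow> real mat) \<Rightarrow> real" where
  "loss_st L istar lam Wt X Xe Y W =
     fro2 (wprod W L 1 * Xe - Y) + lam * fro2 (wprod W istar 1 * Xe - wprod Wt istar 1 * X)"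

definition global_min :: "nat \<Rightarrow> (nat \<Rightarrow> nat) \<Rightarrow> ((nat \<Rightarrow> real mat) \<Rightarrow> real)
    \<Rightarrow> (nat \<Rightarrow> real mat) \<Rightarrow> bool" where
  "global_min L d f W \<longleftrightarrow> valid_net L d W \<and> (\<forall>V. valid_net L d V \<longrightarrow> f W \<le> f V)"

end

theory Submission
  imports Defs
begin

(* Since X_eps has full row rank, its Gram matrix is invertible and the least-squares problem
   min_M |M X_eps - T|^2 has the unique solution ls_fit T X_eps = T X_eps^T (X_eps X_eps^T)^-1.
   Replacing the first teacher layer W~_1 by W~_1 ls_fit X X_eps gives a network V whose partial
   products W_{i:1} are ls_fit (W~_{i:1} X) X_eps for every i; in particular V_{L:1} = ls_fit Y X_eps.
   So V minimises the base loss and both terms of the student-teacher loss at once, and any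
   global minimiser must fit Y as well as V does, which forces its end-to-end matrix to be
   ls_fit Y X_eps.  Realising ls_fit Y X_eps through the teacher is what makes the width
   hypothesis unnecessary. *)

lemma real_self_scalar_prod_eq_0_iff:
  fixes v :: "real vec"
  assumes "v \<in> carrier_vec n"
  shows "v \<bullet> v = 0 \<longleftrightarrow> v = 0\<^sub>v n"
  using conjugate_square_eq_0_vec[OF assms] by (simp add: scalar_prod_def conjugate_vec_def)

lemma (in vec_space) full_rank_span_cols:
  assumes A: "A \<in> carrier_mat n nc" and r: "rank A = n"
  shows "span (set (cols A)) = carrier_vec n"
proof -
  have cols: "set (cols A) \<subseteq> carrier_vec n" using A cols_dim by blast
  have "lin_indpt {}"
    by (metis empty_subsetI fin_dim finite_basis_exists subset_li_is_li vec_vs vectorspace.basis_def)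
  then obtain U where U: "finite U" "maximal U (\<lambda>T. T \<subseteq> set (cols A) \<and> lin_indpt T)"
    using maximal_exists_superset[of "set (cols A)" "\<lambda>T. T \<subseteq> set (cols A) \<and> lin_indpt T" "{}"]
    by auto
  have U_cols: "U \<subseteq> set (cols A)" and U_indpt: "lin_indpt U" using U(2) unfolding maximal_def by auto
  have "card U = n" using rank_card_indpt[OF A U(2)] r by simp
  then have "basis U"
    using dim_li_is_basis[OF fin_dim U(1)] U_cols U_indpt cols dim_is_n by auto
  then have "span U = carrier_vec n" unfolding basis_def by auto
  moreover have "span U \<subseteq> span (set (cols A))" using span_is_monotone U_cols by metis
  ultimately show ?thesis using cols by auto
qed

lemma (in vec_space) orthogonal_to_full_rank_cols:
  assumes A: "A \<in> carrier_mat n nc" and r: "rank A = n" and v: "v \<in> carrier_vec n"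
    and orth: "\<forall>y \<in> set (cols A). v \<bullet> y = 0"
  shows "v \<bullet> v = 0"
proof -
  have "v \<in> orthogonal_complement (set (cols A))"
    using v orth unfolding orthogonal_complement_def by auto
  also have "\<dots> = orthogonal_complement (span (set (cols A)))"
    using in_orthogonal_complement_span[of "set (cols A)"] A cols_dim by blast
  also have "span (set (cols A)) = carrier_vec n"
    using full_rank_span_cols[OF A r] .
  finally show ?thesis using v unfolding orthogonal_complement_def by auto
qed

(* If A A^T v = 0 then |A^T v|^2 = v . A A^T v = 0, so v is orthogonal to the columns of A,
   which span the whole space. *)
lemma gram_mat_det_nonzero:
  fixes A :: "real mat"
  assumes A: "A \<in> carrier_mat n nc" and r: "vec_space.rank n A = n"
  shows "det (A * transpose_mat A) \<noteq> 0"
proof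
  assume "det (A * transpose_mat A) = 0"
  then obtain v where v: "v \<in> carrier_vec n" "v \<noteq> 0\<^sub>v n" "(A * transpose_mat A) *\<^sub>v v = 0\<^sub>v n"
    using det_0_iff_vec_prod_zero_field[of "A * transpose_mat A" n] A by auto
  define w where "w = transpose_mat A *\<^sub>v v"
  have AT: "transpose_mat A \<in> carrier_mat nc n" using A by simp
  have w: "w \<in> carrier_vec nc" unfolding w_def using AT v(1) by simp
  have "A *\<^sub>v w = 0\<^sub>v n" unfolding w_def using assoc_mult_mat_vec[OF A AT v(1)] v(3) by simp
  moreover have "w \<bullet> w = v \<bullet> (A *\<^sub>v w)"
    using transpose_vec_mult_scalar[OF A w v(1)] unfolding w_def .
  ultimately have w0: "w = 0\<^sub>v nc" using v(1) w real_self_scalar_prod_eq_0_iff by simp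
  have "\<forall>y \<in> set (cols A). v \<bullet> y = 0"
  proof
    fix y assume "y \<in> set (cols A)"
    then obtain j where j: "j < nc" "y = col A j" using A by (auto simp: cols_def)
    have "w $ j = col A j \<bullet> v" unfolding w_def using A j by auto
    then show "v \<bullet> y = 0" using w0 j comm_scalar_prod[OF v(1), of y] A by (simp add: col_def)
  qed
  then have "v \<bullet> v = 0" using vec_space.orthogonal_to_full_rank_cols[OF A r v(1)] by blast
  then show False using v(1,2) real_self_scalar_prod_eq_0_iff by blast
qed

lemma gram_mat_inverse:
  fixes A :: "real mat"
  assumes A: "A \<in> carrier_mat n nc" and r: "vec_space.rank n A = n"
  obtains G where "mat_inverse (A * transpose_mat A) = Some G" "G \<in> carrier_mat n n"
    "A * transpose_mat A * G = 1\<^sub>m n" "G * (A * transpose_mat A) = 1\<^sub>m n"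
proof -
  have Gram: "A * transpose_mat A \<in> carrier_mat n n" using A by simp
  have "A * transpose_mat A \<in> Units (ring_mat TYPE(real) n ())"
    using det_non_zero_imp_unit[OF Gram gram_mat_det_nonzero[OF A r]] .
  then obtain G where G: "mat_inverse (A * transpose_mat A) = Some G"
    using mat_inverse(1)[OF Gram] by fastforce
  show thesis using that[OF G] mat_inverse(2)[OF Gram G] by blast
qed

definition frob_inner :: "real mat \<Rightarrow> real mat \<Rightarrow> real" where
  "frob_inner A B = (\<Sum>i<dim_row A. \<Sum>j<dim_col A. A $$ (i, j) * B $$ (i, j))"

lemma fro2_nonneg: "fro2 A \<ge> 0"
  unfolding fro2_def by (intro sum_nonneg) auto

lemma fro2_eq_0_imp_zero:
  assumes A: "A \<in> carrier_mat m n" and z: "fro2 A = 0"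
  shows "A = 0\<^sub>m m n"
proof -
  have "\<forall>i\<in>{..<m}. (\<Sum>j<n. (A $$ (i, j))^2) = 0"
    using z A unfolding fro2_def by (subst (asm) sum_nonneg_eq_0_iff) (auto intro: sum_nonneg)
  then have "\<And>i j. i < m \<Longrightarrow> j < n \<Longrightarrow> (A $$ (i, j))^2 = 0"
    by (subst (asm) sum_nonneg_eq_0_iff) auto
  then show ?thesis using A by (intro eq_matI) auto
qed

lemma fro2_add:
  assumes "P \<in> carrier_mat m n" and "Q \<in> carrier_mat m n"
  shows "fro2 (P + Q) = fro2 P + fro2 Q + 2 * frob_inner P Q"
  using assms unfolding fro2_def frob_inner_def
  by (simp add: power2_sum sum.distrib sum_distrib_left mult.assoc)

lemma frob_inner_mult_left:
  assumes D: "D \<in> carrier_mat m n" and X: "X \<in> carrier_mat n k" and Q: "Q \<in> carrier_mat m k"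
  shows "frob_inner (D * X) Q = frob_inner D (Q * transpose_mat X)"
proof -
  have "frob_inner (D * X) Q = (\<Sum>i<m. \<Sum>j<k. \<Sum>l<n. D $$ (i, l) * (X $$ (l, j) * Q $$ (i, j)))"
    unfolding frob_inner_def using D X Q
    by (auto simp: scalar_prod_def atLeast0LessThan sum_distrib_right mult.assoc intro!: sum.cong)
  also have "\<dots> = (\<Sum>i<m. \<Sum>l<n. \<Sum>j<k. D $$ (i, l) * (X $$ (l, j) * Q $$ (i, j)))"
    by (intro sum.cong refl sum.swap)
  also have "\<dots> = frob_inner D (Q * transpose_mat X)"
    unfolding frob_inner_def using D X Q
    by (auto simp: scalar_prod_def atLeast0LessThan sum_distrib_left mult.commute mult.left_commute
        intro!: sum.cong)
  finally show ?thesis .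
qed

lemma mult_right_invertible_eq_0:
  fixes B A R :: "'a :: semiring_1 mat"
  assumes B: "B \<in> carrier_mat m n" and A: "A \<in> carrier_mat n N" and R: "R \<in> carrier_mat N n"
    and AR: "A * R = 1\<^sub>m n" and "B * A = 0\<^sub>m m N"
  shows "B = 0\<^sub>m m n"
proof -
  have "B = B * (A * R)" unfolding AR using right_mult_one_mat[OF B] by simp
  also have "\<dots> = B * A * R" using B A R by (simp add: assoc_mult_mat)
  finally show ?thesis using \<open>B * A = 0\<^sub>m m N\<close> R by simp
qed

definition ls_fit :: "real mat \<Rightarrow> real mat \<Rightarrow> real mat" where
  "ls_fit T A = T * transpose_mat A * the (mat_inverse (A * transpose_mat A))"

context
  fixes A :: "real mat" and n N :: nat
  assumes A: "A \<in> carrier_mat n N" and full_rank: "vec_space.rank n A = n"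
begin

lemma ls_fit_carrier:
  assumes "T \<in> carrier_mat m N"
  shows "ls_fit T A \<in> carrier_mat m n"
proof -
  obtain G where "mat_inverse (A * transpose_mat A) = Some G" "G \<in> carrier_mat n n"
    using gram_mat_inverse[OF A full_rank] .
  then show ?thesis using assms A by (simp add: ls_fit_def)
qed

lemma ls_fit_mult_left:
  assumes B: "B \<in> carrier_mat m k" and T: "T \<in> carrier_mat k N"
  shows "ls_fit (B * T) A = B * ls_fit T A"
proof -
  obtain G where G: "mat_inverse (A * transpose_mat A) = Some G" "G \<in> carrier_mat n n"
    using gram_mat_inverse[OF A full_rank] .
  have AT: "transpose_mat A \<in> carrier_mat N n" using A by simp
  have "B * T * transpose_mat A * G = B * (T * transpose_mat A * G)"
    using assoc_mult_mat[OF B T AT] assoc_mult_mat[OF B mult_carrier_mat[OF T AT] G(2)] by simp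
  then show ?thesis unfolding ls_fit_def G(1) by simp
qed

lemma ls_fit_normal_equation:
  assumes T: "T \<in> carrier_mat m N"
  shows "(ls_fit T A * A - T) * transpose_mat A = 0\<^sub>m m n"
proof -
  obtain G where G: "mat_inverse (A * transpose_mat A) = Some G" "G \<in> carrier_mat n n"
    and GA: "G * (A * transpose_mat A) = 1\<^sub>m n"
    using gram_mat_inverse[OF A full_rank] by metis
  have AT: "transpose_mat A \<in> carrier_mat N n" using A by simp
  have F: "ls_fit T A \<in> carrier_mat m n" using ls_fit_carrier[OF T] .
  have "ls_fit T A * A * transpose_mat A = T * transpose_mat A * (G * (A * transpose_mat A))"
    unfolding ls_fit_def G(1) option.sel
    using assoc_mult_mat[OF mult_carrier_mat[OF T AT] G(2) A]
      assoc_mult_mat[OF mult_carrier_mat[OF T AT] mult_carrier_mat[OF G(2) A] AT]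
      assoc_mult_mat[OF G(2) A AT] by simp
  also have "\<dots> = T * transpose_mat A" using GA T AT by simp
  finally have "ls_fit T A * A * transpose_mat A = T * transpose_mat A" .
  moreover have "(ls_fit T A * A - T) * transpose_mat A = ls_fit T A * A * transpose_mat A - T * transpose_mat A"
    using F A T AT by (intro minus_mult_distrib_mat) auto
  ultimately show ?thesis using T AT by (intro eq_matI) auto
qed

lemma fro2_ls_fit_decomp:
  assumes T: "T \<in> carrier_mat m N" and M: "M \<in> carrier_mat m n"
  shows "fro2 (M * A - T) = fro2 ((M - ls_fit T A) * A) + fro2 (ls_fit T A * A - T)"
proof -
  define F where "F = ls_fit T A"
  have F: "F \<in> carrier_mat m n" unfolding F_def using ls_fit_carrier[OF T] .
  have D: "M - F \<in> carrier_mat m n" using minus_carrier_mat[OF F] .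
  have split: "M * A - T = (M - F) * A + (F * A - T)"
    using M F A T by (simp add: minus_mult_distrib_mat[of _ m n _ _ N]) (intro eq_matI; simp)
  have "frob_inner ((M - F) * A) (F * A - T) = frob_inner (M - F) (0\<^sub>m m n)"
    using frob_inner_mult_left[OF D A minus_carrier_mat[OF T]] ls_fit_normal_equation[OF T]
    unfolding F_def by simp
  also have "\<dots> = 0" unfolding frob_inner_def using F by (intro sum.neutral ballI) auto
  moreover have "(M - F) * A \<in> carrier_mat m N" "F * A - T \<in> carrier_mat m N"
    using D A T by auto
  ultimately show ?thesis unfolding split F_def[symmetric] by (simp add: fro2_add)
qed

lemma ls_fit_optimal:
  assumes "T \<in> carrier_mat m N" and "M \<in> carrier_mat m n"
  shows "fro2 (ls_fit T A * A - T) \<le> fro2 (M * A - T)"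
  using fro2_ls_fit_decomp[OF assms] fro2_nonneg by simp

lemma ls_fit_unique:
  assumes T: "T \<in> carrier_mat m N" and M: "M \<in> carrier_mat m n" and "c \<ge> 0"
    and le: "fro2 (M * A - T) + c \<le> fro2 (ls_fit T A * A - T)"
  shows "M = ls_fit T A"
proof -
  have D: "M - ls_fit T A \<in> carrier_mat m n" using minus_carrier_mat[OF ls_fit_carrier[OF T]] .
  have "fro2 ((M - ls_fit T A) * A) = 0"
    using fro2_ls_fit_decomp[OF T M] le \<open>c \<ge> 0\<close> fro2_nonneg[of "(M - ls_fit T A) * A"] by linarith
  then have zero: "(M - ls_fit T A) * A = 0\<^sub>m m N"
    using fro2_eq_0_imp_zero[OF mult_carrier_mat[OF D A]] by blast
  obtain G where G: "G \<in> carrier_mat n n" "A * transpose_mat A * G = 1\<^sub>m n"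
    using gram_mat_inverse[OF A full_rank] by metis
  have AT: "transpose_mat A \<in> carrier_mat N n" using A by simp
  have "A * (transpose_mat A * G) = 1\<^sub>m n" using assoc_mult_mat[OF A AT G(1)] G(2) by simp
  then have diff: "M - ls_fit T A = 0\<^sub>m m n"
    using mult_right_invertible_eq_0[OF D A mult_carrier_mat[OF AT G(1)] _ zero] by blast
  show ?thesis
  proof (rule eq_matI)
    fix i j assume "i < dim_row (ls_fit T A)" "j < dim_col (ls_fit T A)"
    then show "M $$ (i, j) = ls_fit T A $$ (i, j)"
      using arg_cong[OF diff, of "\<lambda>B. B $$ (i, j)"] M ls_fit_carrier[OF T] by simp
  qed (use M ls_fit_carrier[OF T] in auto)
qed

end

lemma wprod_self [simp]: "wprod W i i = W i"
  unfolding wprod_def by simp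

lemma wprod_split_last:
  assumes "j < i"
  shows "wprod W i j = wprod W i (Suc j) * W j"
proof -
  have "rev [j..<i] = rev [Suc j..<i] @ [j]" using assms by (simp add: upt_conv_Cons)
  then show ?thesis unfolding wprod_def by simp
qed

lemma wprod_cong:
  assumes "j \<le> i" and eq: "\<And>k. j \<le> k \<Longrightarrow> k \<le> i \<Longrightarrow> W k = V k"
  shows "wprod W i j = wprod V i j"
  unfolding wprod_def
proof (rule foldl_cong)
  show "W i = V i" using assms by simp
  fix A k assume "k \<in> set (rev [j..<i])"
  then show "A * W k = A * V k" using eq by simp
qed simp

lemma valid_net_layer:
  "valid_net L d W \<Longrightarrow> 1 \<le> i \<Longrightarrow> i \<le> L \<Longrightarrow> W i \<in> carrier_mat (d i) (d (i - 1))"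
  unfolding valid_net_def by simp

lemma wprod_carrier:
  assumes W: "valid_net L d W" and "1 \<le> j" "j \<le> i" "i \<le> L"
  shows "wprod W i j \<in> carrier_mat (d i) (d (j - 1))"
  using \<open>j \<le> i\<close> \<open>1 \<le> j\<close>
proof (induction j rule: inc_induct)
  case base
  then show ?case using valid_net_layer[OF W] \<open>i \<le> L\<close> by simp
next
  case (step j)
  have "W j \<in> carrier_mat (d j) (d (j - 1))"
    using valid_net_layer[OF W] step.prems step.hyps \<open>i \<le> L\<close> by simp
  then show ?case using step wprod_split_last[OF step.hyps(2)] by simp
qed

lemma valid_net_update_first:
  assumes W: "valid_net L d W" and S: "S \<in> carrier_mat (d 0) (d 0)"
  shows "valid_net L d (W(1 := W 1 * S))"
  unfolding valid_net_def
proof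
  fix i assume "i \<in> {1..L}"
  then show "(W(1 := W 1 * S)) i \<in> carrier_mat (d i) (d (i - 1))"
    using valid_net_layer[OF W, of i] valid_net_layer[OF W, of 1] S by (cases "i = 1") auto
qed

lemma wprod_update_first:
  assumes W: "valid_net L d W" and S: "S \<in> carrier_mat (d 0) (d 0)" and i: "1 \<le> i" "i \<le> L"
  shows "wprod (W(1 := W 1 * S)) i 1 = wprod W i 1 * S"
proof (cases "i = 1")
  case False
  then have "wprod (W(1 := W 1 * S)) i 1 = wprod W i 2 * (W 1 * S)"
    using i wprod_split_last[of 1 i] wprod_cong[of 2 i "W(1 := W 1 * S)" W] by (simp add: numeral_2_eq_2)
  also have "\<dots> = wprod W i 2 * W 1 * S"
    using wprod_carrier[OF W, of 2 i] valid_net_layer[OF W, of 1] i False S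
    by (intro assoc_mult_mat[symmetric]) auto
  finally show ?thesis using False i wprod_split_last[of 1 i W] by (simp add: numeral_2_eq_2)
qed simp

lemma teacher_ls_fit_net:
  fixes Wt :: "nat \<Rightarrow> real mat"
  assumes Wt: "valid_net L d Wt" and X: "X \<in> carrier_mat (d 0) N"
    and A: "A \<in> carrier_mat (d 0) N" and full_rank: "vec_space.rank (d 0) A = d 0"
  obtains V where "valid_net L d V"
    "\<And>i. 1 \<le> i \<Longrightarrow> i \<le> L \<Longrightarrow> wprod V i 1 = ls_fit (wprod Wt i 1 * X) A"
proof
  define S where "S = ls_fit X A"
  have S: "S \<in> carrier_mat (d 0) (d 0)" unfolding S_def using ls_fit_carrier[OF A full_rank X] .
  show "valid_net L d (Wt(1 := Wt 1 * S))" using valid_net_update_first[OF Wt S] .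
  fix i assume "1 \<le> i" "i \<le> L"
  then show "wprod (Wt(1 := Wt 1 * S)) i 1 = ls_fit (wprod Wt i 1 * X) A"
    using wprod_update_first[OF Wt S] wprod_carrier[OF Wt, of 1 i] X
    unfolding S_def by (simp add: ls_fit_mult_left[OF A full_rank])
qed

theorem mainTheorem7:
  fixes L N istar :: nat and d :: "nat \<Rightarrow> nat" and lam :: real
    and X E Y :: "real mat" and Wt :: "nat \<Rightarrow> real mat"
  defines "Xe \<equiv> X + E"
  assumes "L \<ge> 2"
    and "X \<in> carrier_mat (d 0) N" and "E \<in> carrier_mat (d 0) N" and "Y \<in> carrier_mat (d L) N"
    and "N \<ge> d 0"
    and "vec_space.rank (d 0) Xe = d 0"
    and "valid_net L d Wt"
    and "wprod Wt L 1 * X = Y"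
    and "istar \<in> {1..L}" and "lam > 0"
    and "Min (d ` {0..L}) = min (d 0) (d L)"
  shows "(\<forall>W. global_min L d (loss_base L Xe Y) W \<longrightarrow>
            wprod W L 1 = Y * transpose_mat Xe * the (mat_inverse (Xe * transpose_mat Xe)))
       \<and> (\<forall>W. global_min L d (loss_st L istar lam Wt X Xe Y) W \<longrightarrow>
            wprod W L 1 = Y * transpose_mat Xe * the (mat_inverse (Xe * transpose_mat Xe)))"
proof -
  note X = assms(3) and Y = assms(5) and full_rank = assms(7) and Wt = assms(8)
  have Xe: "Xe \<in> carrier_mat (d 0) N" unfolding Xe_def using X assms(4) by simp
  have idx: "1 \<le> L" "istar \<le> L" "1 \<le> istar" using assms(2,10) by auto
  define T where "T = wprod Wt istar 1 * X"
  have T: "T \<in> carrier_mat (d istar) N" unfolding T_def using wprod_carrier[OF Wt, of 1 istar] idx X by simp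
  obtain V where V: "valid_net L d V"
    and V_prod: "\<And>i. 1 \<le> i \<Longrightarrow> i \<le> L \<Longrightarrow> wprod V i 1 = ls_fit (wprod Wt i 1 * X) Xe"
    using teacher_ls_fit_net[OF Wt X Xe full_rank] by blast
  have V_end: "wprod V L 1 = ls_fit Y Xe" using V_prod[of L] idx assms(9) by simp
  have V_teacher: "wprod V istar 1 = ls_fit T Xe" using V_prod[of istar] idx unfolding T_def by simp
  have end_to_end: "wprod W L 1 = ls_fit Y Xe"
    if "valid_net L d W" "fro2 (wprod W L 1 * Xe - Y) + c \<le> fro2 (ls_fit Y Xe * Xe - Y)" "c \<ge> 0"
    for W c
    using ls_fit_unique[OF Xe full_rank Y _ that(3,2)] wprod_carrier[OF that(1), of 1 L] idx by simp
  have "wprod W L 1 = ls_fit Y Xe" if "global_min L d (loss_base L Xe Y) W" for W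
    using that V V_end end_to_end[of W 0] unfolding global_min_def loss_base_def by auto
  moreover have "wprod W L 1 = ls_fit Y Xe" if "global_min L d (loss_st L istar lam Wt X Xe Y) W" for W
  proof -
    have W: "valid_net L d W"
      and loss_le: "loss_st L istar lam Wt X Xe Y W \<le> loss_st L istar lam Wt X Xe Y V"
      using that V unfolding global_min_def by auto
    have le: "fro2 (wprod W L 1 * Xe - Y) + lam * fro2 (wprod W istar 1 * Xe - T)
        \<le> fro2 (ls_fit Y Xe * Xe - Y) + lam * fro2 (ls_fit T Xe * Xe - T)"
      using loss_le unfolding loss_st_def V_end V_teacher T_def .
    define gap where "gap = fro2 (wprod W istar 1 * Xe - T) - fro2 (ls_fit T Xe * Xe - T)"
    have "gap \<ge> 0"
      unfolding gap_def using ls_fit_optimal[OF Xe full_rank T] wprod_carrier[OF W, of 1 istar] idx by simp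
    then show ?thesis
      using end_to_end[OF W, of "lam * gap"] le assms(11) unfolding gap_def by (simp add: algebra_simps)
  qed
  ultimately show ?thesis unfolding ls_fit_def by blast
qed

end
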